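(* Let $X,Y$ be topological spaces and $f:X\to Y$ a function. Then $f$ is statistically continuous if and only if $f^{-1}(B)$ is statistically closed in $X$ for every statistically closed subset $B$ of $Y$.
   Context: For $A\subseteq\mathbb{N}$ let $d_n(A)=|A\cap\{1,\dots,n\}|/n$, $\overline{d}(A)=\limsup_n d_n(A)$, $\underline{d}(A)=\liminf_n d_n(A)$, and $d(A)$ their common value when equal. A sequence in $X$ is a map from an infinite subset $M\subseteq\mathbb{N}$ into $X$, written $(x_n)_{n\in M}$; a subsequence is $(x_n)_{n\in N}$ with $N\subseteq M$ infinite. It is nonthin if $\overline{d}(M)>0$. A nonthin sequence $(x_n)_{n\in M}$ is statistically convergent to $a\in X$ if for every open $U\ni a$, $d(\{n\in M:x_n\notin U\})=0$. The statistical closure $\overline{F}^{ST}$ of $F\subseteq X$ is the set of $x\in X$ such that some nonthin sequence in $F$ is statistically convergent to $x$; $F$ is statistically closed if $\overline{F}^{ST}=F$. A function $f:X\to Y$ is statistically continuous if whenever a nonthin sequence $(x_n)_{n\in K}$ in $X$ statistically converges to $x$, the sequence $(f(x_n))_{n\in K}$ statistically converges to $f(x)$. *)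

theory Defs
  imports "HOL-Analysis.Analysis" "HOL-Library.Liminf_Limsup"
begin

text \<open>Natural numbers of the paper are the positive naturals; d_n(A) = |A \<inter> {1..n}| / n.\<close>

definition dens_n :: "nat set \<Rightarrow> nat \<Rightarrow> real" where
  "dens_n A n = real (card (A \<inter> {1..n})) / real n"

definition upper_density :: "nat set \<Rightarrow> ereal" where
  "upper_density A = limsup (\<lambda>n. ereal (dens_n A n))"

definition density_zero :: "nat set \<Rightarrow> bool" where
  "density_zero A \<longleftrightarrow> (\<lambda>n. dens_n A n) \<longlonglongrightarrow> 0"

text \<open>A sequence is a map on an infinite index set M \<subseteq> {1,2,...}; it is nonthin if upper density of M is positive.\<close>
definition nonthin :: "nat set \<Rightarrow> bool" where
  "nonthin M \<longleftrightarrow> M \<subseteq> {1..} \<and> infinite M \<and> upper_density M > 0"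

definition stat_conv :: "nat set \<Rightarrow> (nat \<Rightarrow> 'a::topological_space) \<Rightarrow> 'a \<Rightarrow> bool" where
  "stat_conv M x a \<longleftrightarrow> nonthin M \<and>
     (\<forall>U. open U \<and> a \<in> U \<longrightarrow> density_zero {n \<in> M. x n \<notin> U})"

definition stat_closure :: "'a::topological_space set \<Rightarrow> 'a set" where
  "stat_closure F = {a. \<exists>M x. nonthin M \<and> (\<forall>n\<in>M. x n \<in> F) \<and> stat_conv M x a}"

definition stat_closed :: "'a::topological_space set \<Rightarrow> bool" where
  "stat_closed F \<longleftrightarrow> stat_closure F = F"

definition stat_continuous :: "('a::topological_space \<Rightarrow> 'b::topological_space) \<Rightarrow> bool" where
  "stat_continuous f \<longleftrightarrow>
     (\<forall>M x a. stat_conv M x a \<longrightarrow> stat_conv M (\<lambda>n. f (x n)) (f a))"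

end

theory Submission
  imports Defs
begin

text \<open>If f is statistically continuous, it maps a witnessing sequence for a point of the
  statistical closure of the preimage of B to a witnessing sequence in B. Conversely, if f(x_n) fails to converge statistically to f(a),
  some open V \<ni> f(a) is missed on a set K of indices of positive upper density; the
  subsequence indexed by K still converges statistically to a and lies in the preimage of the
  closed, hence statistically closed, set -V, so f(a) \<notin> V.\<close>

lemma dens_n_nonneg: "dens_n A n \<ge> 0"
  by (simp add: dens_n_def)

lemma dens_n_mono: "B \<subseteq> A \<Longrightarrow> dens_n B n \<le> dens_n A n"
  unfolding dens_n_def by (intro divide_right_mono of_nat_mono card_mono) auto

lemma upper_density_nonneg: "upper_density A \<ge> 0"
proof -
  have "liminf (\<lambda>n. ereal (dens_n A n)) \<ge> 0"
    by (rule Liminf_bounded) (simp add: dens_n_nonneg)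
  also have "\<dots> \<le> upper_density A"
    unfolding upper_density_def by (rule Liminf_le_Limsup) simp
  finally show ?thesis .
qed

lemma density_zero_iff_upper_density_eq_0: "density_zero A \<longleftrightarrow> upper_density A = 0"
proof
  assume "density_zero A"
  then have "(\<lambda>n. ereal (dens_n A n)) \<longlonglongrightarrow> ereal 0"
    unfolding density_zero_def by (rule tendsto_ereal)
  then show "upper_density A = 0"
    unfolding upper_density_def by (simp add: lim_imp_Limsup zero_ereal_def)
next
  assume limsup: "upper_density A = 0"
  have "liminf (\<lambda>n. ereal (dens_n A n)) \<ge> 0"
    by (rule Liminf_bounded) (simp add: dens_n_nonneg)
  moreover have "liminf (\<lambda>n. ereal (dens_n A n)) \<le> upper_density A"
    unfolding upper_density_def by (rule Liminf_le_Limsup) simp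
  ultimately have "(\<lambda>n. ereal (dens_n A n)) \<longlonglongrightarrow> ereal 0"
    using limsup unfolding upper_density_def zero_ereal_def
    by (intro Liminf_eq_Limsup) auto
  then show "density_zero A"
    unfolding density_zero_def using lim_ereal by blast
qed

lemma density_zero_subset: "density_zero A \<Longrightarrow> B \<subseteq> A \<Longrightarrow> density_zero B"
  unfolding density_zero_def
  by (rule tendsto_sandwich[of "\<lambda>_. 0" _ _ "\<lambda>n. dens_n A n"])
     (auto simp: dens_n_nonneg dens_n_mono)

lemma finite_imp_density_zero: "finite A \<Longrightarrow> density_zero A"
  unfolding density_zero_def
proof (rule tendsto_sandwich[of "\<lambda>_. 0" _ _ "\<lambda>n. real (card A) / real n"])
  assume "finite A"
  then show "\<forall>\<^sub>F n in sequentially. dens_n A n \<le> real (card A) / real n"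
    unfolding dens_n_def by (intro always_eventually allI divide_right_mono of_nat_mono card_mono) auto
qed (auto simp: dens_n_nonneg lim_const_over_n)

lemma nonthin_iff_not_density_zero: "M \<subseteq> {1..} \<Longrightarrow> nonthin M \<longleftrightarrow> \<not> density_zero M"
  unfolding nonthin_def density_zero_iff_upper_density_eq_0
  using finite_imp_density_zero density_zero_iff_upper_density_eq_0 upper_density_nonneg
  by (metis order_less_le)

lemma nonthin_atLeast_1: "nonthin {1..}"
proof -
  have "\<forall>\<^sub>F n in sequentially. dens_n {1..} n = 1"
    unfolding eventually_sequentially by (auto simp: dens_n_def intro: exI[of _ 1])
  then have "(\<lambda>n. dens_n {1..} n) \<longlonglongrightarrow> 1"
    by (rule tendsto_eventually)
  then have "\<not> density_zero {1..}"
    unfolding density_zero_def using LIMSEQ_unique by fastforce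
  then show ?thesis
    by (simp add: nonthin_iff_not_density_zero)
qed

lemma stat_conv_const: "stat_conv {1..} (\<lambda>_. a) a"
  unfolding stat_conv_def using nonthin_atLeast_1 finite_imp_density_zero by auto

lemma stat_conv_subseq:
  assumes "stat_conv M x a" "K \<subseteq> M" "nonthin K"
  shows "stat_conv K x a"
  using assms unfolding stat_conv_def
  by (auto elim!: density_zero_subset)

lemma stat_closureI: "stat_conv M x a \<Longrightarrow> (\<And>n. n \<in> M \<Longrightarrow> x n \<in> F) \<Longrightarrow> a \<in> stat_closure F"
  unfolding stat_closure_def stat_conv_def by blast

lemma stat_closureE:
  assumes "a \<in> stat_closure F"
  obtains M x where "stat_conv M x a" "\<forall>n\<in>M. x n \<in> F"
  using assms unfolding stat_closure_def stat_conv_def by auto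

lemma subset_stat_closure: "F \<subseteq> stat_closure F"
  using stat_closureI[OF stat_conv_const] by blast

lemma stat_closed_iff_stat_closure_subset: "stat_closed F \<longleftrightarrow> stat_closure F \<subseteq> F"
  unfolding stat_closed_def using subset_stat_closure by blast

lemma stat_closure_if_not_density_zero:
  assumes conv: "stat_conv M x a" and pos: "\<not> density_zero {n \<in> M. x n \<in> F}"
  shows "a \<in> stat_closure F"
proof -
  have "M \<subseteq> {1..}"
    using conv unfolding stat_conv_def nonthin_def by blast
  then have "nonthin {n \<in> M. x n \<in> F}"
    using pos by (subst nonthin_iff_not_density_zero) auto
  then have "stat_conv {n \<in> M. x n \<in> F} x a"
    by (intro stat_conv_subseq[OF conv]) auto
  then show ?thesis
    by (rule stat_closureI) simp
qed

lemma closed_imp_stat_closed: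
  assumes "closed C"
  shows "stat_closed C"
  unfolding stat_closed_iff_stat_closure_subset
proof
  fix b
  assume "b \<in> stat_closure C"
  then obtain M x where conv: "stat_conv M x b" and in_C: "\<forall>n\<in>M. x n \<in> C"
    by (rule stat_closureE)
  have "{n \<in> M. x n \<notin> - C} = M"
    using in_C by auto
  moreover have "\<not> density_zero M"
    using conv unfolding stat_conv_def nonthin_def
    by (auto simp: density_zero_iff_upper_density_eq_0)
  ultimately show "b \<in> C"
    using conv assms unfolding stat_conv_def by (metis open_Compl Compl_iff)
qed

lemma stat_continuous_imp_stat_closed_vimage:
  assumes cont: "stat_continuous f" and "stat_closed B"
  shows "stat_closed (f -` B)"
  unfolding stat_closed_iff_stat_closure_subset
proof
  fix a
  assume "a \<in> stat_closure (f -` B)"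
  then obtain M x where conv: "stat_conv M x a" and in_B: "\<forall>n\<in>M. x n \<in> f -` B"
    by (rule stat_closureE)
  have "stat_conv M (\<lambda>n. f (x n)) (f a)"
    using cont conv unfolding stat_continuous_def by blast
  then have "f a \<in> stat_closure B"
    by (rule stat_closureI) (use in_B in simp)
  then show "a \<in> f -` B"
    using \<open>stat_closed B\<close> unfolding stat_closed_def by simp
qed

lemma stat_continuous_if_stat_closed_vimage:
  fixes f :: "'a::topological_space \<Rightarrow> 'b::topological_space"
  assumes closed_vimage: "\<And>B. stat_closed B \<Longrightarrow> stat_closed (f -` B)"
  shows "stat_continuous f"
  unfolding stat_continuous_def
proof (intro allI impI)
  fix M and x :: "nat \<Rightarrow> 'a" and a
  assume conv: "stat_conv M x a"
  have "density_zero {n \<in> M. x n \<in> f -` (- V)}" if "open V" "f a \<in> V" for V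
  proof (rule ccontr)
    assume "\<not> density_zero {n \<in> M. x n \<in> f -` (- V)}"
    then have "a \<in> stat_closure (f -` (- V))"
      using conv by (rule stat_closure_if_not_density_zero[rotated])
    moreover have "stat_closed (f -` (- V))"
      using \<open>open V\<close> by (intro closed_vimage closed_imp_stat_closed) (simp add: closed_Compl)
    ultimately show False
      using \<open>f a \<in> V\<close> unfolding stat_closed_def by simp
  qed
  then show "stat_conv M (\<lambda>n. f (x n)) (f a)"
    using conv unfolding stat_conv_def by simp
qed

theorem mainTheorem2:
  fixes f :: "'a::topological_space \<Rightarrow> 'b::topological_space"
  shows "stat_continuous f \<longleftrightarrow> (\<forall>B::'b set. stat_closed B \<longrightarrow> stat_closed (f -` B))"
  using stat_continuous_imp_stat_closed_vimage stat_continuous_if_stat_closed_vimage by blast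

end
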